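(* Let $V$ be a finite set of truth values and $\models_{\mathcal{D}_p,\mathcal{D}_c}$ a mixed consequence truth-relation on $V$ that is not pure ($\mathcal{D}_p\neq\mathcal{D}_c$), with constant expressive semantics. Then it admits regular connectives whose regularity rules are satisfied by no classical connective, and it also admits, for every classical connective, a regular connective sharing a regularity rule with it.
   Context: $V$ contains distinct $1,0$; sets of designated values $\mathcal{D}$ satisfy $1\in\mathcal{D}$, $0\notin\mathcal{D}$; $\gamma\models_{\mathcal{D}_p,\mathcal{D}_c}\delta$ iff ($\gamma\subseteq\mathcal{D}_p\Rightarrow\delta\cap\mathcal{D}_c\neq\emptyset$); pure means $\mathcal{D}_p=\mathcal{D}_c$. Semantics: valuations mapping atoms to $V$, connectives (of any arity, including $0$) interpreted by fixed truth functions, extended compositionally, every assignment to finitely many distinct atoms realized; constant expressive: every value is the constant value of some formula. $\Gamma\vdash\Delta$ iff $v(\Gamma)\models v(\Delta)$ for all $v$. An $n$-ary connective $C$ is regular with rule $(\mathcal{B}^p,\mathcal{B}^c)$, $\mathcal{B}^p,\mathcal{B}^c\subseteq\mathcal{P}(\{1..n\})^2$, if for all $\Gamma,\Delta,F_1..F_n$: $\Gamma\cup\{C(\vec F)\}\vdash\Delta$ iff for all $(B_p,B_c)\in\mathcal{B}^p$, $\Gamma\cup\{F_i:i\in B_p\}\vdash\{F_i:i\in B_c\}\cup\Delta$; $\Gamma\vdash\{C(\vec F)\}\cup\Delta$ iff the same for all $(B_p,B_c)\in\mathcal{B}^c$ (empty conjunction = true). Classical logic: $V=\{0,1\}$ with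 $\models_{\{1\},\{1\}}$; classical connectives: truth functions $\{0,1\}^n\to\{0,1\}$. Connectives share a regularity rule if some $(\mathcal{B}^p,\mathcal{B}^c)$ is satisfied by both. *)

theory Defs
  imports Main
begin

datatype 'c fm = Var nat | App 'c "'c fm list"

fun wff :: "('c \<Rightarrow> nat) \<Rightarrow> 'c fm \<Rightarrow> bool" where
  "wff ar (Var p) = True"
| "wff ar (App c Fs) = (length Fs = ar c \<and> (\<forall>F\<in>set Fs. wff ar F))"

fun eval :: "('c \<Rightarrow> 'v list \<Rightarrow> 'v) \<Rightarrow> (nat \<Rightarrow> 'v) \<Rightarrow> 'c fm \<Rightarrow> 'v" where
  "eval I v (Var p) = v p"
| "eval I v (App c Fs) = I c (map (eval I v) Fs)"

definition mc :: "'v set \<Rightarrow> 'v set \<Rightarrow> 'v set \<Rightarrow> 'v set \<Rightarrow> bool" where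
  "mc Dp Dc \<gamma> \<delta> \<longleftrightarrow> (\<gamma> \<subseteq> Dp \<longrightarrow> \<delta> \<inter> Dc \<noteq> {})"

definition realizes_all :: "(nat \<Rightarrow> 'v) set \<Rightarrow> bool" where
  "realizes_all Val \<longleftrightarrow>
     (\<forall>A a. finite A \<longrightarrow> (\<exists>v\<in>Val. \<forall>p\<in>A. v p = a p))"

definition ent :: "(nat \<Rightarrow> 'v) set \<Rightarrow> ('c \<Rightarrow> 'v list \<Rightarrow> 'v) \<Rightarrow> 'v set \<Rightarrow> 'v set
                   \<Rightarrow> 'c fm set \<Rightarrow> 'c fm set \<Rightarrow> bool" where
  "ent Val I Dp Dc \<Gamma> \<Delta> \<longleftrightarrow> (\<forall>v\<in>Val. mc Dp Dc (eval I v ` \<Gamma>) (eval I v ` \<Delta>))"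

definition constant_expressive :: "(nat \<Rightarrow> 'v) set \<Rightarrow> ('c \<Rightarrow> nat) \<Rightarrow> ('c \<Rightarrow> 'v list \<Rightarrow> 'v) \<Rightarrow> bool" where
  "constant_expressive Val ar I \<longleftrightarrow>
     (\<forall>x::'v. \<exists>F. wff ar F \<and> (\<forall>v\<in>Val. eval I v F = x))"

definition is_rule :: "nat \<Rightarrow> (nat set \<times> nat set) set \<times> (nat set \<times> nat set) set \<Rightarrow> bool" where
  "is_rule n R \<longleftrightarrow> (\<forall>(P,Q)\<in>fst R \<union> snd R. P \<subseteq> {1..n} \<and> Q \<subseteq> {1..n})"

text \<open>Argument selection {F_i : i \<in> B}, arguments indexed from 1.\<close>
definition sel :: "'a list \<Rightarrow> nat set \<Rightarrow> 'a set" where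
  "sel Fs B = {Fs ! (i - 1) | i. i \<in> B}"

definition regular :: "(nat \<Rightarrow> 'v) set \<Rightarrow> ('c \<Rightarrow> nat) \<Rightarrow> ('c \<Rightarrow> 'v list \<Rightarrow> 'v) \<Rightarrow> 'v set \<Rightarrow> 'v set
     \<Rightarrow> 'c \<Rightarrow> (nat set \<times> nat set) set \<times> (nat set \<times> nat set) set \<Rightarrow> bool" where
  "regular Val ar I Dp Dc c R \<longleftrightarrow> is_rule (ar c) R \<and>
     (\<forall>\<Gamma> \<Delta> Fs. (\<forall>F\<in>\<Gamma> \<union> \<Delta> \<union> set Fs. wff ar F) \<and> length Fs = ar c \<longrightarrow>
        (ent Val I Dp Dc (insert (App c Fs) \<Gamma>) \<Delta> \<longleftrightarrow>
           (\<forall>(P,Q)\<in>fst R. ent Val I Dp Dc (\<Gamma> \<union> sel Fs P) (sel Fs Q \<union> \<Delta>))) \<and>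
        (ent Val I Dp Dc \<Gamma> (insert (App c Fs) \<Delta>) \<longleftrightarrow>
           (\<forall>(P,Q)\<in>snd R. ent Val I Dp Dc (\<Gamma> \<union> sel Fs P) (sel Fs Q \<union> \<Delta>))))"

text \<open>Extending a semantics by one new n-ary connective (named None) with truth function f.\<close>
definition ext_ar :: "('c \<Rightarrow> nat) \<Rightarrow> nat \<Rightarrow> 'c option \<Rightarrow> nat" where
  "ext_ar ar n x = (case x of None \<Rightarrow> n | Some c \<Rightarrow> ar c)"

definition ext_I :: "('c \<Rightarrow> 'v list \<Rightarrow> 'v) \<Rightarrow> ('v list \<Rightarrow> 'v) \<Rightarrow> 'c option \<Rightarrow> 'v list \<Rightarrow> 'v" where
  "ext_I I f x = (case x of None \<Rightarrow> f | Some c \<Rightarrow> I c)"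

text \<open>Classical logic: values bool (1 = True, 0 = False), relation with Dp = Dc = {True},
  all classical connectives (n, g) with arity n and truth function g, all valuations.\<close>
definition classical_regular :: "nat \<Rightarrow> (bool list \<Rightarrow> bool)
     \<Rightarrow> (nat set \<times> nat set) set \<times> (nat set \<times> nat set) set \<Rightarrow> bool" where
  "classical_regular n g R \<longleftrightarrow> regular UNIV fst snd {True} {True} (n, g) R"

end

theory Submission
  imports Defs
begin

(* Regularity can be checked pointwise: it suffices that the value of the connective
   lies in Dp exactly when its argument values falsify the premise sequent
   {x_i : i in P} |- {x_i : i in Q} of some (P, Q) in the left component of the rule, and lies
   outside Dc exactly when they falsify one of the right component.

   So a nullary constant with value a has left rule {({}, {})} if a is in Dp and {} otherwise,
   and right rule {({}, {})} if a is not in Dc and {} otherwise. For a value in exactly one of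
   Dp and Dc the two components coincide, which no classical constant allows.

   For a classical truth function g take the rule with one premise sequent per row of the truth
   table, the rows where g is true on the left and the others on the right. A tuple of values
   is compatible with a row when its entries at the true positions are in Dp and those at the
   false positions are not in Dc, and the new connective needs a value on the tuple that is in
   Dp iff a true row is compatible and outside Dc iff a false row is. It is 1 or 0 if the
   compatible rows are of one kind only; a value in Dp - Dc if both kinds occur, since two
   compatible rows differ at an argument, which must then lie in Dp - Dc; and a value in
   Dc - Dp if no row is compatible, since otherwise the Dp-membership pattern of the tuple
   would be a compatible row. *)

type_synonym rule = "(nat set \<times> nat set) set \<times> (nat set \<times> nat set) set"

lemma image_sel:
  assumes "P \<subseteq> {1..length Fs}"
  shows "h ` sel Fs P = sel (map h Fs) P"
  using assms unfolding sel_def by (auto; force)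

lemma mc_Un:
  "mc Dp Dc (\<gamma> \<union> \<gamma>') (\<delta>' \<union> \<delta>) \<longleftrightarrow> (\<not> mc Dp Dc \<gamma>' \<delta>' \<longrightarrow> mc Dp Dc \<gamma> \<delta>)"
  unfolding mc_def by blast

lemma ent_premise_iff:
  assumes "P \<subseteq> {1..length Fs}" "Q \<subseteq> {1..length Fs}"
  shows "ent Val I Dp Dc (\<Gamma> \<union> sel Fs P) (sel Fs Q \<union> \<Delta>) \<longleftrightarrow>
    (\<forall>v\<in>Val. \<not> mc Dp Dc (sel (map (eval I v) Fs) P) (sel (map (eval I v) Fs) Q)
       \<longrightarrow> mc Dp Dc (eval I v ` \<Gamma>) (eval I v ` \<Delta>))"
  unfolding ent_def image_Un image_sel[OF assms(1)] image_sel[OF assms(2)] mc_Un ..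

lemma ent_insert_left_iff:
  "ent Val I Dp Dc (insert (App c Fs) \<Gamma>) \<Delta> \<longleftrightarrow>
    (\<forall>v\<in>Val. I c (map (eval I v) Fs) \<in> Dp \<longrightarrow> mc Dp Dc (eval I v ` \<Gamma>) (eval I v ` \<Delta>))"
  unfolding ent_def mc_def by auto

lemma ent_insert_right_iff:
  "ent Val I Dp Dc \<Gamma> (insert (App c Fs) \<Delta>) \<longleftrightarrow>
    (\<forall>v\<in>Val. I c (map (eval I v) Fs) \<notin> Dc \<longrightarrow> mc Dp Dc (eval I v ` \<Gamma>) (eval I v ` \<Delta>))"
  unfolding ent_def mc_def by auto

lemma ent_premises_iff:
  assumes "\<forall>(P, Q)\<in>S. P \<subseteq> {1..length Fs} \<and> Q \<subseteq> {1..length Fs}"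
  shows "(\<forall>(P, Q)\<in>S. ent Val I Dp Dc (\<Gamma> \<union> sel Fs P) (sel Fs Q \<union> \<Delta>)) \<longleftrightarrow>
    (\<forall>v\<in>Val. (\<exists>(P, Q)\<in>S. \<not> mc Dp Dc (sel (map (eval I v) Fs) P) (sel (map (eval I v) Fs) Q))
       \<longrightarrow> mc Dp Dc (eval I v ` \<Gamma>) (eval I v ` \<Delta>))"
proof -
  have "(\<forall>(P, Q)\<in>S. ent Val I Dp Dc (\<Gamma> \<union> sel Fs P) (sel Fs Q \<union> \<Delta>)) \<longleftrightarrow>
    (\<forall>(P, Q)\<in>S. \<forall>v\<in>Val. \<not> mc Dp Dc (sel (map (eval I v) Fs) P) (sel (map (eval I v) Fs) Q)
       \<longrightarrow> mc Dp Dc (eval I v ` \<Gamma>) (eval I v ` \<Delta>))"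
    using assms by (intro ball_cong) (auto simp: ent_premise_iff)
  then show ?thesis by blast
qed

lemma regularI:
  assumes R_rule: "is_rule (ar c) R"
    and left: "\<And>xs. length xs = ar c \<Longrightarrow>
      I c xs \<in> Dp \<longleftrightarrow> (\<exists>(P, Q)\<in>fst R. \<not> mc Dp Dc (sel xs P) (sel xs Q))"
    and right: "\<And>xs. length xs = ar c \<Longrightarrow>
      I c xs \<notin> Dc \<longleftrightarrow> (\<exists>(P, Q)\<in>snd R. \<not> mc Dp Dc (sel xs P) (sel xs Q))"
  shows "regular Val ar I Dp Dc c R"
  unfolding regular_def
proof (intro conjI R_rule allI impI)
  fix \<Gamma> \<Delta> Fs
  assume "(\<forall>F\<in>\<Gamma> \<union> \<Delta> \<union> set Fs. wff ar F) \<and> length Fs = ar c"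
  then have len: "length Fs = ar c" by simp
  then have "\<forall>(P, Q)\<in>fst R. P \<subseteq> {1..length Fs} \<and> Q \<subseteq> {1..length Fs}"
    and "\<forall>(P, Q)\<in>snd R. P \<subseteq> {1..length Fs} \<and> Q \<subseteq> {1..length Fs}"
    using R_rule unfolding is_rule_def by auto
  with left right len
  show "ent Val I Dp Dc (insert (App c Fs) \<Gamma>) \<Delta> \<longleftrightarrow>
      (\<forall>(P, Q)\<in>fst R. ent Val I Dp Dc (\<Gamma> \<union> sel Fs P) (sel Fs Q \<union> \<Delta>))"
    and "ent Val I Dp Dc \<Gamma> (insert (App c Fs) \<Delta>) \<longleftrightarrow>
      (\<forall>(P, Q)\<in>snd R. ent Val I Dp Dc (\<Gamma> \<union> sel Fs P) (sel Fs Q \<union> \<Delta>))"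
    by (simp_all add: ent_insert_left_iff ent_insert_right_iff ent_premises_iff)
qed

definition constant_rule :: "'v set \<Rightarrow> 'v set \<Rightarrow> 'v \<Rightarrow> rule" where
  "constant_rule Dp Dc a = ({B. B = ({}, {}) \<and> a \<in> Dp}, {B. B = ({}, {}) \<and> a \<notin> Dc})"

lemma regular_constant_rule:
  "regular Val (ext_ar ar 0) (ext_I I (\<lambda>_. a)) Dp Dc None (constant_rule Dp Dc a)"
  by (rule regularI) (auto simp: is_rule_def constant_rule_def ext_ar_def ext_I_def sel_def mc_def)

lemma regular_nullary_rule:
  assumes reg: "regular Val ar I Dp Dc c R" and nullary: "ar c = 0" and "Val \<noteq> {}"
  shows "fst R = {} \<longleftrightarrow> I c [] \<notin> Dp" and "snd R = {} \<longleftrightarrow> I c [] \<in> Dc"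
proof -
  have R_rule: "is_rule 0 R" using reg nullary unfolding regular_def by simp
  have args: "(\<forall>F\<in>{} \<union> {} \<union> set []. wff ar F) \<and> length [] = ar c"
    using nullary by simp
  have no_premise: "\<not> ent Val I Dp Dc ({} \<union> sel [] P) (sel [] Q \<union> {})"
    if "(P, Q) \<in> fst R \<union> snd R" for P Q
    using bspec[OF R_rule[unfolded is_rule_def] that] \<open>Val \<noteq> {}\<close>
    by (simp add: ent_def mc_def sel_def)
  have "ent Val I Dp Dc {App c []} {} \<longleftrightarrow> fst R = {}"
    and "ent Val I Dp Dc {} {App c []} \<longleftrightarrow> snd R = {}"
    using reg[unfolded regular_def, THEN conjunct2, rule_format, OF args] no_premise by auto
  then show "fst R = {} \<longleftrightarrow> I c [] \<notin> Dp" and "snd R = {} \<longleftrightarrow> I c [] \<in> Dc"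
    using \<open>Val \<noteq> {}\<close> by (auto simp: ent_def mc_def)
qed

lemma classical_nullary_rule:
  assumes "classical_regular 0 g R"
  shows "fst R = {} \<longleftrightarrow> snd R \<noteq> {}"
  using regular_nullary_rule[OF assms[unfolded classical_regular_def]] by simp

lemma not_classical_regular_constant_rule:
  assumes "a \<in> Dp \<longleftrightarrow> a \<notin> Dc"
  shows "\<not> classical_regular 0 g (constant_rule Dp Dc a)"
proof
  assume "classical_regular 0 g (constant_rule Dp Dc a)"
  from classical_nullary_rule[OF this] assms show False
    by (cases "a \<in> Dp") (auto simp: constant_rule_def)
qed

definition true_positions :: "bool list \<Rightarrow> nat set" where
  "true_positions r = {Suc j | j. j < length r \<and> r ! j}"

definition false_positions :: "bool list \<Rightarrow> nat set" where
  "false_positions r = {Suc j | j. j < length r \<and> \<not> r ! j}"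

definition truth_table_rule :: "nat \<Rightarrow> (bool list \<Rightarrow> bool) \<Rightarrow> rule" where
  "truth_table_rule n g =
    ({(true_positions r, false_positions r) | r. length r = n \<and> g r},
     {(true_positions r, false_positions r) | r. length r = n \<and> \<not> g r})"

definition compatible :: "'v set \<Rightarrow> 'v set \<Rightarrow> 'v list \<Rightarrow> bool list \<Rightarrow> bool" where
  "compatible Dp Dc xs r \<longleftrightarrow> list_all2 (\<lambda>x b. if b then x \<in> Dp else x \<notin> Dc) xs r"

lemma is_rule_truth_table_rule: "is_rule n (truth_table_rule n g)"
  unfolding is_rule_def truth_table_rule_def true_positions_def false_positions_def by auto

lemma compatible_length: "compatible Dp Dc xs r \<Longrightarrow> length r = length xs"
  unfolding compatible_def by (simp add: list_all2_lengthD)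

lemma not_mc_positions_iff_compatible:
  assumes "length r = length xs"
  shows "\<not> mc Dp Dc (sel xs (true_positions r)) (sel xs (false_positions r))
    \<longleftrightarrow> compatible Dp Dc xs r"
proof -
  have "sel xs (true_positions r) = {xs ! j | j. j < length r \<and> r ! j}"
    and "sel xs (false_positions r) = {xs ! j | j. j < length r \<and> \<not> r ! j}"
    unfolding sel_def true_positions_def false_positions_def by force+
  then show ?thesis
    using assms unfolding mc_def compatible_def list_all2_conv_all_nth by auto
qed

lemma regular_truth_table_ruleI:
  assumes "ar c = n"
    and "\<And>xs. length xs = n \<Longrightarrow> I c xs \<in> Dp \<longleftrightarrow> (\<exists>r. compatible Dp Dc xs r \<and> g r)"
    and "\<And>xs. length xs = n \<Longrightarrow> I c xs \<notin> Dc \<longleftrightarrow> (\<exists>r. compatible Dp Dc xs r \<and> \<not> g r)"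
  shows "regular Val ar I Dp Dc c (truth_table_rule n g)"
proof (rule regularI)
  have rows: "(\<exists>(P, Q)\<in>{(true_positions r, false_positions r) | r. length r = n \<and> h r}.
      \<not> mc Dp Dc (sel xs P) (sel xs Q)) \<longleftrightarrow> (\<exists>r. compatible Dp Dc xs r \<and> h r)"
    if "length xs = n" for xs and h :: "bool list \<Rightarrow> bool"
  proof -
    have "(\<exists>(P, Q)\<in>{(true_positions r, false_positions r) | r. length r = n \<and> h r}.
        \<not> mc Dp Dc (sel xs P) (sel xs Q)) \<longleftrightarrow>
      (\<exists>r. length r = length xs \<and> h r \<and>
        \<not> mc Dp Dc (sel xs (true_positions r)) (sel xs (false_positions r)))"
      using that by auto
    also have "\<dots> \<longleftrightarrow> (\<exists>r. compatible Dp Dc xs r \<and> h r)"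
      using not_mc_positions_iff_compatible compatible_length by blast
    finally show ?thesis .
  qed
  show "is_rule (ar c) (truth_table_rule n g)"
    using assms(1) is_rule_truth_table_rule by simp
  show "I c xs \<in> Dp \<longleftrightarrow> (\<exists>(P, Q)\<in>fst (truth_table_rule n g). \<not> mc Dp Dc (sel xs P) (sel xs Q))"
    if "length xs = ar c" for xs
    using that assms rows[of xs g] by (simp add: truth_table_rule_def)
  show "I c xs \<notin> Dc \<longleftrightarrow> (\<exists>(P, Q)\<in>snd (truth_table_rule n g). \<not> mc Dp Dc (sel xs P) (sel xs Q))"
    if "length xs = ar c" for xs
    using that assms rows[of xs "Not \<circ> g"] by (simp add: truth_table_rule_def)
qed

lemma compatible_classical: "compatible {True} {True} xs r \<longleftrightarrow> r = xs"
proof -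
  have eq: "(\<lambda>x b. if b then x \<in> {True} else x \<notin> {True}) = (=)"
    by (auto simp: fun_eq_iff)
  show ?thesis unfolding compatible_def eq list_all2_eq[symmetric] by auto
qed

lemma classical_regular_truth_table_rule: "classical_regular n g (truth_table_rule n g)"
  unfolding classical_regular_def
  by (rule regular_truth_table_ruleI) (auto simp: compatible_classical)

lemma compatible_ne_imp_Dp_minus_Dc:
  assumes "compatible Dp Dc xs r1" "compatible Dp Dc xs r2" "r1 \<noteq> r2"
  shows "set xs \<inter> (Dp - Dc) \<noteq> {}"
proof -
  have "length r1 = length xs" "length r2 = length xs"
    using assms(1,2) compatible_length by blast+
  then obtain j where "j < length xs" "r1 ! j \<noteq> r2 ! j"
    using \<open>r1 \<noteq> r2\<close> nth_equalityI[of r1 r2] by auto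
  then have "xs ! j \<in> Dp - Dc"
    using assms(1,2) unfolding compatible_def list_all2_conv_all_nth by (cases "r1 ! j") auto
  with \<open>j < length xs\<close> show ?thesis by (auto intro: nth_mem)
qed

lemma compatible_membership_pattern:
  assumes "set xs \<inter> (Dc - Dp) = {}"
  shows "compatible Dp Dc xs (map (\<lambda>x. x \<in> Dp) xs)"
  using assms unfolding compatible_def list_all2_conv_all_nth by (auto dest: nth_mem)

lemma truth_table_value_exists:
  assumes "one \<in> Dp" "one \<in> Dc" "zero \<notin> Dp" "zero \<notin> Dc"
  shows "\<exists>y. (y \<in> Dp \<longleftrightarrow> (\<exists>r. compatible Dp Dc xs r \<and> g r))
           \<and> (y \<notin> Dc \<longleftrightarrow> (\<exists>r. compatible Dp Dc xs r \<and> \<not> g r))"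
proof (cases "\<exists>r. compatible Dp Dc xs r \<and> g r"; cases "\<exists>r. compatible Dp Dc xs r \<and> \<not> g r")
  assume "\<exists>r. compatible Dp Dc xs r \<and> g r" "\<exists>r. compatible Dp Dc xs r \<and> \<not> g r"
  moreover from this have "set xs \<inter> (Dp - Dc) \<noteq> {}"
    using compatible_ne_imp_Dp_minus_Dc by metis
  ultimately show ?thesis by blast
next
  assume "\<exists>r. compatible Dp Dc xs r \<and> g r" "\<not> (\<exists>r. compatible Dp Dc xs r \<and> \<not> g r)"
  with assms show ?thesis by blast
next
  assume "\<not> (\<exists>r. compatible Dp Dc xs r \<and> g r)" "\<exists>r. compatible Dp Dc xs r \<and> \<not> g r"
  with assms show ?thesis by blast
next
  assume "\<not> (\<exists>r. compatible Dp Dc xs r \<and> g r)" "\<not> (\<exists>r. compatible Dp Dc xs r \<and> \<not> g r)"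
  moreover from this have "set xs \<inter> (Dc - Dp) \<noteq> {}"
    using compatible_membership_pattern by blast
  ultimately show ?thesis by blast
qed

lemma ex_regular_truth_table_extension:
  assumes "one \<in> Dp" "one \<in> Dc" "zero \<notin> Dp" "zero \<notin> Dc"
  shows "\<exists>f. regular Val (ext_ar ar n) (ext_I I f) Dp Dc None (truth_table_rule n g)"
proof -
  have "\<exists>f. \<forall>xs. (f xs \<in> Dp \<longleftrightarrow> (\<exists>r. compatible Dp Dc xs r \<and> g r))
      \<and> (f xs \<notin> Dc \<longleftrightarrow> (\<exists>r. compatible Dp Dc xs r \<and> \<not> g r))"
    by (intro choice allI truth_table_value_exists[OF assms])
  then obtain f where f: "\<forall>xs. (f xs \<in> Dp \<longleftrightarrow> (\<exists>r. compatible Dp Dc xs r \<and> g r))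
      \<and> (f xs \<notin> Dc \<longleftrightarrow> (\<exists>r. compatible Dp Dc xs r \<and> \<not> g r))" ..
  have "regular Val (ext_ar ar n) (ext_I I f) Dp Dc None (truth_table_rule n g)"
    by (rule regular_truth_table_ruleI) (simp_all add: ext_ar_def ext_I_def f)
  then show ?thesis by blast
qed

theorem theorem6p3:
  fixes one zero :: "'v::finite"
    and Dp Dc :: "'v set"
    and Val :: "(nat \<Rightarrow> 'v) set"
    and ar :: "'c \<Rightarrow> nat"
    and I :: "'c \<Rightarrow> 'v list \<Rightarrow> 'v"
  assumes "one \<noteq> zero"
    and "one \<in> Dp" and "zero \<notin> Dp"
    and "one \<in> Dc" and "zero \<notin> Dc"
    and "Dp \<noteq> Dc"
    and "realizes_all Val"
    and "constant_expressive Val ar I"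
  shows "(\<exists>n f R. regular Val (ext_ar ar n) (ext_I I f) Dp Dc None R
                 \<and> (\<forall>g. \<not> classical_regular n g R))
       \<and> (\<forall>n g. \<exists>f R. regular Val (ext_ar ar n) (ext_I I f) Dp Dc None R
                 \<and> classical_regular n g R)"
proof
  obtain a where "a \<in> Dp \<longleftrightarrow> a \<notin> Dc"
    using \<open>Dp \<noteq> Dc\<close> by blast
  then have "regular Val (ext_ar ar 0) (ext_I I (\<lambda>_. a)) Dp Dc None (constant_rule Dp Dc a)
      \<and> (\<forall>g. \<not> classical_regular 0 g (constant_rule Dp Dc a))"
    by (simp add: regular_constant_rule not_classical_regular_constant_rule)
  then show "\<exists>n f R. regular Val (ext_ar ar n) (ext_I I f) Dp Dc None R
      \<and> (\<forall>g. \<not> classical_regular n g R)"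
    by blast
next
  show "\<forall>n g. \<exists>f R. regular Val (ext_ar ar n) (ext_I I f) Dp Dc None R
      \<and> classical_regular n g R"
    using ex_regular_truth_table_extension[OF assms(2,4,3,5)] classical_regular_truth_table_rule
    by blast
qed

end
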